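(* Let $\mathcal{H}_{A_1},\mathcal{H}_{A_2}$ be finite-dimensional Hilbert spaces with fixed reference bases (and the product basis on $\mathcal{H}_{A_1}\otimes\mathcal{H}_{A_2}$). For all states $\rho_1$ on $\mathcal{H}_{A_1}$ and $\rho_2$ on $\mathcal{H}_{A_2}$, $$C_{\max}(\rho_1\otimes\rho_2)=C_{\max}(\rho_1)+C_{\max}(\rho_2).$$
   Context: $D_{\max}(\rho\|\sigma)=\min\{\lambda\ge0:\rho\leq2^\lambda\sigma\}$. $\mathcal{I}$ is the set of incoherent states (states diagonal in the reference basis), and the max-relative entropy of coherence is $C_{\max}(\rho)=\min_{\sigma\in\mathcal{I}}D_{\max}(\rho\|\sigma)$. *)

theory Defs
  imports "HOL-Analysis.Analysis" "HOL-Library.Complex_Order"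
begin

text \<open>Operators on a finite-dimensional Hilbert space whose fixed reference (orthonormal)
basis is indexed by the finite type 'a are represented by their matrices in that basis.\<close>
type_synonym 'a cmat = "'a \<Rightarrow> 'a \<Rightarrow> complex"

definition psd :: "('a::finite) cmat \<Rightarrow> bool" where
  "psd A \<longleftrightarrow> (\<forall>v :: 'a \<Rightarrow> complex. 0 \<le> (\<Sum>i\<in>UNIV. \<Sum>j\<in>UNIV. cnj (v i) * A i j * v j))"

definition loewner_le :: "('a::finite) cmat \<Rightarrow> 'a cmat \<Rightarrow> bool" where
  "loewner_le A B \<longleftrightarrow> psd (\<lambda>i j. B i j - A i j)"

definition mtrace :: "('a::finite) cmat \<Rightarrow> complex" where
  "mtrace A = (\<Sum>i\<in>UNIV. A i i)"

definition density :: "('a::finite) cmat \<Rightarrow> bool" where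
  "density \<rho> \<longleftrightarrow> psd \<rho> \<and> mtrace \<rho> = 1"

definition incoherent :: "('a::finite) cmat \<Rightarrow> bool" where
  "incoherent \<sigma> \<longleftrightarrow> density \<sigma> \<and> (\<forall>i j. i \<noteq> j \<longrightarrow> \<sigma> i j = 0)"

definition tensor :: "('a::finite) cmat \<Rightarrow> ('b::finite) cmat \<Rightarrow> ('a \<times> 'b) cmat" where
  "tensor A B = (\<lambda>(i, k) (j, l). A i j * B k l)"

text \<open>Max-relative entropy; the minimum over an empty set is +\<infinity>.\<close>
definition Dmax :: "('a::finite) cmat \<Rightarrow> 'a cmat \<Rightarrow> ereal" where
  "Dmax \<rho> \<sigma> = Inf (ereal ` {l::real. l \<ge> 0 \<and>
       loewner_le \<rho> (\<lambda>i j. complex_of_real (2 powr l) * \<sigma> i j)})"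

definition Cmax :: "('a::finite) cmat \<Rightarrow> ereal" where
  "Cmax \<rho> = (INF \<sigma> \<in> {\<sigma>. incoherent \<sigma>}. Dmax \<rho> \<sigma>)"

end

theory Submission
  imports Defs
begin

text \<open>With \<open>\<Lambda>\<close> ranging over diagonal matrices, \<open>2 powr Cmax \<rho>\<close> is the value of the
  semidefinite program \<open>min {tr \<Lambda> | \<rho> \<le> \<Lambda>}\<close>, whose dual is
  \<open>max {tr (M \<rho>) | M \<ge> 0, M\<^sub>i\<^sub>i = 1}\<close>; strong duality comes from separating the
  primal slack set from \<open>0\<close> by a hyperplane.  Tensoring primal feasible points of \<open>\<rho>\<^sub>1\<close>
  and \<open>\<rho>\<^sub>2\<close> gives one for \<open>\<rho>\<^sub>1 \<otimes> \<rho>\<^sub>2\<close>, so \<open>C\<^sub>m\<^sub>a\<^sub>x\<close> is subadditive.  Conversely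
  \<open>M\<^sub>1 \<otimes> M\<^sub>2\<close> of optimal dual matrices is dual feasible for \<open>\<rho>\<^sub>1 \<otimes> \<rho>\<^sub>2\<close> with value the
  product of the two optima, so by weak duality \<open>C\<^sub>m\<^sub>a\<^sub>x\<close> is superadditive.\<close>

section \<open>Positive semidefinite matrices\<close>

lemma nonneg_complex_iff: "0 \<le> (z::complex) \<longleftrightarrow> 0 \<le> Re z \<and> Im z = 0"
  by (auto simp: less_eq_complex_def)

lemma cnj_mult_self_nonneg: "0 \<le> cnj z * (z::complex)"
  by (simp add: nonneg_complex_iff)

lemma sum_if_zero: "(\<Sum>j\<in>S. if c then f j else 0) = (if c then \<Sum>j\<in>S. f j else 0)"
  by simp

lemma sum_swap_innermost:
  "(\<Sum>i\<in>A. \<Sum>j\<in>B. \<Sum>k\<in>C. f i j k) = (\<Sum>k\<in>C. \<Sum>i\<in>A. \<Sum>j\<in>B. f i j k)"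
  by (simp add: sum.swap[of _ B C] sum.swap[of _ A C])

lemma sum_UNIV_prod: "(\<Sum>p\<in>(UNIV::('a::finite \<times> 'b::finite) set). f p) = (\<Sum>i\<in>UNIV. \<Sum>k\<in>UNIV. f (i, k))"
  by (simp add: sum.cartesian_product UNIV_Times_UNIV[symmetric] del: UNIV_Times_UNIV)

definition qform :: "('a::finite) cmat \<Rightarrow> ('a \<Rightarrow> complex) \<Rightarrow> complex" where
  "qform A v = (\<Sum>i\<in>UNIV. \<Sum>j\<in>UNIV. cnj (v i) * A i j * v j)"

definition unit_vec :: "'a \<Rightarrow> 'a \<Rightarrow> complex" where
  "unit_vec k x = (if x = k then 1 else 0)"

definition hermitian :: "('a::finite) cmat \<Rightarrow> bool" where
  "hermitian A \<longleftrightarrow> (\<forall>i j. A j i = cnj (A i j))"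

lemma hermitian_cnj: "hermitian A \<Longrightarrow> cnj (A i j) = A j i"
  unfolding hermitian_def by metis

lemma hermitian_add: "hermitian A \<Longrightarrow> hermitian B \<Longrightarrow> hermitian (\<lambda>i j. A i j + B i j)"
  unfolding hermitian_def[of "\<lambda>i j. _ i j + _ i j"] by (simp add: hermitian_cnj)

lemma hermitian_diff: "hermitian A \<Longrightarrow> hermitian B \<Longrightarrow> hermitian (\<lambda>i j. A i j - B i j)"
  unfolding hermitian_def[of "\<lambda>i j. _ i j - _ i j"] by (simp add: hermitian_cnj)

lemma hermitian_scale: "hermitian A \<Longrightarrow> hermitian (\<lambda>i j. complex_of_real c * A i j)"
  unfolding hermitian_def[of "\<lambda>i j. _ * _ i j"] by (simp add: hermitian_cnj)

lemma psd_iff_qform: "psd A \<longleftrightarrow> (\<forall>v. 0 \<le> qform A v)"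
  by (simp add: psd_def qform_def)

lemma sum_mult_unit_vec: "(\<Sum>j\<in>UNIV. f j * (\<alpha> * unit_vec i j + \<beta> * unit_vec k j)) = \<alpha> * f i + \<beta> * f (k::'a::finite)"
  by (simp add: unit_vec_def sum.distrib mult_delta_left mult_delta_right algebra_simps cong: if_cong)

lemma qform_two_unit_vecs:
  "qform A (\<lambda>x. \<alpha> * unit_vec i x + \<beta> * unit_vec j x) =
     cnj \<alpha> * \<alpha> * A i i + cnj \<alpha> * \<beta> * A i j + cnj \<beta> * \<alpha> * A j i + cnj \<beta> * \<beta> * A j j"
proof -
  have cnj_vec: "cnj (\<alpha> * unit_vec i x + \<beta> * unit_vec j x) = cnj \<alpha> * unit_vec i x + cnj \<beta> * unit_vec j x" for x
    by (simp add: unit_vec_def)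
  have "qform A (\<lambda>x. \<alpha> * unit_vec i x + \<beta> * unit_vec j x) =
     (\<Sum>x\<in>UNIV. (\<Sum>y\<in>UNIV. A x y * (\<alpha> * unit_vec i y + \<beta> * unit_vec j y)) * (cnj \<alpha> * unit_vec i x + cnj \<beta> * unit_vec j x))"
    unfolding qform_def cnj_vec by (simp add: sum_distrib_left sum_distrib_right algebra_simps)
  also have "\<dots> = (\<Sum>x\<in>UNIV. (\<alpha> * A x i + \<beta> * A x j) * (cnj \<alpha> * unit_vec i x + cnj \<beta> * unit_vec j x))"
    by (simp add: sum_mult_unit_vec)
  also have "\<dots> = cnj \<alpha> * (\<alpha> * A i i + \<beta> * A i j) + cnj \<beta> * (\<alpha> * A j i + \<beta> * A j j)"
    by (subst sum_mult_unit_vec) simp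
  finally show ?thesis by (simp add: algebra_simps)
qed

lemma qform_unit_vec: "qform A (unit_vec i) = A i i"
  using qform_two_unit_vecs[of A 1 i 0 i] by (simp add: unit_vec_def[abs_def])

lemma psd_hermitian:
  assumes "psd A" shows "hermitian A"
  unfolding hermitian_def
proof (intro allI)
  fix i j
  have real: "Im (qform A v) = 0" for v using assms by (simp add: psd_iff_qform nonneg_complex_iff)
  have diag: "Im (A i i) = 0" "Im (A j j) = 0" using real[of "unit_vec i"] real[of "unit_vec j"]
    by (simp_all add: qform_unit_vec)
  have "Im (A i j) + Im (A j i) = 0"
    using real[of "\<lambda>x. 1 * unit_vec i x + 1 * unit_vec j x"] diag unfolding qform_two_unit_vecs by simp
  moreover have "Re (A i j) - Re (A j i) = 0"
    using real[of "\<lambda>x. 1 * unit_vec i x + \<i> * unit_vec j x"] diag unfolding qform_two_unit_vecs by simp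
  ultimately show "A j i = cnj (A i j)" by (simp add: complex_eq_iff)
qed

lemma psd_diag_nonneg_real:
  assumes "psd A" shows "A i i = of_real (Re (A i i))" and "0 \<le> Re (A i i)"
proof -
  have "0 \<le> A i i" using assms qform_unit_vec[of A i] by (metis psd_iff_qform)
  then show "A i i = of_real (Re (A i i))" and "0 \<le> Re (A i i)"
    by (simp_all add: nonneg_complex_iff complex_eq_iff)
qed

text \<open>Otherwise the form at \<open>x e\<^sub>k + e\<^sub>j\<close> is negative for a suitable \<open>x\<close>.\<close>
lemma psd_zero_diag_row:
  assumes "psd A" "A k k = 0" shows "A k j = 0"
proof (rule ccontr)
  assume nz: "A k j \<noteq> 0"
  let ?c = "cmod (A j k)"
  have herm: "A j k = cnj (A k j)" using hermitian_cnj[OF psd_hermitian[OF assms(1)]] by simp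
  have cpos: "?c > 0" using nz herm by simp
  define r where "r = (Re (A j j) + 1) / (2 * ?c^2)"
  define x where "x = - of_real r * cnj (A j k)"
  have "0 \<le> qform A (\<lambda>y. x * unit_vec k y + 1 * unit_vec j y)" using assms(1) by (simp add: psd_iff_qform)
  then have "0 \<le> Re (cnj x * A k j + x * A j k + A j j)"
    using assms(2) unfolding qform_two_unit_vecs by (simp add: nonneg_complex_iff)
  also have "cnj x * A k j + x * A j k = - 2 * of_real r * of_real (?c^2)"
    using herm unfolding x_def by (simp add: complex_norm_square[symmetric] algebra_simps)
  finally have "0 \<le> - 2 * r * ?c^2 + Re (A j j)" by simp
  moreover have "2 * r * ?c^2 = Re (A j j) + 1" using cpos unfolding r_def by simp
  ultimately show False by simp
qed

lemma hermitian_qform_real: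
  assumes "hermitian A" shows "Im (qform A v) = 0"
proof -
  have "cnj (qform A v) = (\<Sum>i\<in>UNIV. \<Sum>j\<in>UNIV. v i * A j i * cnj (v j))"
    unfolding qform_def by (simp add: hermitian_cnj[OF assms])
  also have "\<dots> = qform A v" unfolding qform_def
    by (subst sum.swap) (simp add: algebra_simps)
  finally show ?thesis by (metis Reals_cnj_iff complex_is_Real_iff)
qed

lemma psd_zero: "psd (\<lambda>i j. 0)"
  by (simp add: psd_iff_qform qform_def)

lemma qform_linear_combination:
  "qform (\<lambda>i j. complex_of_real u * X i j + complex_of_real v * Y i j) w =
     complex_of_real u * qform X w + complex_of_real v * qform Y w"
  unfolding qform_def by (simp add: algebra_simps sum.distrib sum_distrib_left)

lemma psd_nonneg_combination:
  "psd X \<Longrightarrow> psd Y \<Longrightarrow> u \<ge> 0 \<Longrightarrow> v \<ge> 0 \<Longrightarrow>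
     psd (\<lambda>i j. complex_of_real u * X i j + complex_of_real v * Y i j)"
  unfolding psd_iff_qform qform_linear_combination nonneg_complex_iff by simp

lemma psd_add: "psd X \<Longrightarrow> psd Y \<Longrightarrow> psd (\<lambda>i j. X i j + Y i j)"
  using psd_nonneg_combination[of X Y 1 1] by simp

lemma psd_scale: "psd A \<Longrightarrow> 0 \<le> c \<Longrightarrow> psd (\<lambda>i j. complex_of_real c * A i j)"
  using psd_nonneg_combination[of A A c 0] by simp

definition diag_mat :: "('a::finite \<Rightarrow> real) \<Rightarrow> 'a cmat" where
  "diag_mat lam = (\<lambda>i j. if i = j then complex_of_real (lam i) else 0)"

lemma hermitian_diag_mat: "hermitian (diag_mat lam)"
  by (simp add: hermitian_def diag_mat_def)

lemma qform_diag_mat: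
  "qform (diag_mat lam) v = complex_of_real (\<Sum>i\<in>UNIV. lam i * (cmod (v i))\<^sup>2)"
proof -
  have "qform (diag_mat lam) v = (\<Sum>i\<in>UNIV. cnj (v i) * complex_of_real (lam i) * v i)"
    unfolding qform_def diag_mat_def by (simp add: mult_delta_left mult_delta_right sum_if_zero)
  also have "\<dots> = (\<Sum>i\<in>UNIV. complex_of_real (lam i * (cmod (v i))\<^sup>2))"
  proof (rule sum.cong[OF refl])
    fix i
    have "cnj (v i) * complex_of_real (lam i) * v i = complex_of_real (lam i) * (v i * cnj (v i))" by simp
    also have "v i * cnj (v i) = complex_of_real ((cmod (v i))\<^sup>2)" by (rule complex_norm_square[symmetric])
    finally show "cnj (v i) * complex_of_real (lam i) * v i = complex_of_real (lam i * (cmod (v i))\<^sup>2)"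
      by (simp only: of_real_mult)
  qed
  finally show ?thesis by simp
qed

lemma psd_diag_mat: "(\<And>i. 0 \<le> lam i) \<Longrightarrow> psd (diag_mat lam)"
  unfolding psd_iff_qform qform_diag_mat nonneg_complex_iff Re_complex_of_real Im_complex_of_real
  by (simp add: sum_nonneg)

section \<open>Gram factorisation and tensor products\<close>

lemma qform_add_unit_vec:
  "qform A (\<lambda>x. v x + t * unit_vec k x) = qform A v + t * (\<Sum>i\<in>UNIV. cnj (v i) * A i k)
     + cnj t * (\<Sum>j\<in>UNIV. A k j * v j) + cnj t * t * A k k"
  unfolding qform_def unit_vec_def
  by (simp add: sum.distrib mult_delta_left mult_delta_right if_distrib[of cnj]
       sum_if_zero sum_distrib_left algebra_simps cong: if_cong)

text \<open>Completing the square: the Schur complement form at \<open>v\<close> is the form of \<open>A\<close> at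
  \<open>v - (\<Sum>\<^sub>j A\<^sub>k\<^sub>j v\<^sub>j / A\<^sub>k\<^sub>k) e\<^sub>k\<close>.\<close>
lemma psd_schur_complement:
  assumes A: "psd A" and nz: "A k k \<noteq> 0"
  shows "psd (\<lambda>i j. A i j - A i k * A k j / A k k)"
  unfolding psd_iff_qform
proof
  fix v
  have herm: "cnj (A i j) = A j i" for i j using hermitian_cnj[OF psd_hermitian[OF A]] .
  define a where "a = A k k"
  define s where "s = (\<Sum>j\<in>UNIV. A k j * v j)"
  have cs: "(\<Sum>i\<in>UNIV. cnj (v i) * A i k) = cnj s"
    unfolding s_def by (simp add: herm mult.commute)
  have "qform (\<lambda>i j. A i j - A i k * A k j / A k k) v =
     (\<Sum>i\<in>UNIV. \<Sum>j\<in>UNIV. cnj (v i) * A i j * v j - cnj (v i) * A i k * (A k j * v j) / a)"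
    unfolding qform_def a_def by (intro sum.cong refl) (simp add: field_simps)
  also have "\<dots> = qform A v - (\<Sum>i\<in>UNIV. cnj (v i) * A i k) * s / a"
    unfolding qform_def s_def sum_product by (simp add: sum_subtractf sum_divide_distrib)
  also have "\<dots> = qform A (\<lambda>x. v x + (- s / a) * unit_vec k x)"
    unfolding qform_add_unit_vec cs s_def[symmetric] using nz herm[of k k]
    by (simp add: a_def field_simps)
  finally show "0 \<le> qform (\<lambda>i j. A i j - A i k * A k j / A k k) v"
    using A by (simp add: psd_iff_qform)
qed

text \<open>One step of a Cholesky factorisation.\<close>
lemma psd_split_pivot:
  assumes A: "psd A" and supp: "\<forall>i j. i \<notin> T \<or> j \<notin> T \<longrightarrow> A i j = 0"
  obtains u A' where "psd A'" "\<forall>i j. i \<notin> T - {k} \<or> j \<notin> T - {k} \<longrightarrow> A' i j = 0"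
    "\<forall>i j. A i j = u i * cnj (u j) + A' i j"
proof (cases "A k k = 0")
  case True
  have row: "A k j = 0" for j using psd_zero_diag_row[OF A True] .
  have col: "A j k = 0" for j using row[of j] hermitian_cnj[OF psd_hermitian[OF A], of k j] by simp
  show thesis
  proof (rule that[where u = "\<lambda>_. 0" and A' = A])
    show "\<forall>i j. i \<notin> T - {k} \<or> j \<notin> T - {k} \<longrightarrow> A i j = 0"
      using supp row col by (metis DiffI singletonD)
  qed (simp_all add: A)
next
  case False
  define A' where "A' = (\<lambda>i j. A i j - A i k * A k j / A k k)"
  define c where "c = sqrt (Re (A k k))"
  define u where "u = (\<lambda>i. A i k / of_real c)"
  have "c * c = Re (A k k)" using psd_diag_nonneg_real(2)[OF A, of k] by (simp add: c_def)
  then have pivot: "of_real c * of_real c = A k k"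
    using psd_diag_nonneg_real(1)[OF A, of k] by (metis of_real_mult)
  have split: "A i j = u i * cnj (u j) + A' i j" for i j
    using pivot False hermitian_cnj[OF psd_hermitian[OF A], of j k]
    by (simp add: u_def A'_def field_simps)
  have supp': "\<forall>i j. i \<notin> T - {k} \<or> j \<notin> T - {k} \<longrightarrow> A' i j = 0"
  proof (intro allI impI)
    fix i j assume "i \<notin> T - {k} \<or> j \<notin> T - {k}"
    then consider "i = k" | "j = k" | "i \<notin> T" | "j \<notin> T" by blast
    then show "A' i j = 0"
      by cases (use False supp in \<open>simp_all add: A'_def\<close>)
  qed
  show thesis
  proof (rule that[OF _ supp'])
    show "psd A'" unfolding A'_def by (rule psd_schur_complement[OF A False])
    show "\<forall>i j. A i j = u i * cnj (u j) + A' i j" using split by blast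
  qed
qed

lemma psd_gram_decomposition_on:
  "finite T \<Longrightarrow> psd A \<Longrightarrow> \<forall>i j. i \<notin> T \<or> j \<notin> T \<longrightarrow> A i j = 0 \<Longrightarrow>
    \<exists>U. \<forall>i j. A i j = (\<Sum>k\<in>T. U k i * cnj (U k j))"
proof (induction T arbitrary: A rule: finite_induct)
  case empty
  then show ?case by auto
next
  case (insert k T)
  obtain u A' where A': "psd A'" "\<forall>i j. i \<notin> T \<or> j \<notin> T \<longrightarrow> A' i j = 0"
      and split: "\<forall>i j. A i j = u i * cnj (u j) + A' i j"
    using psd_split_pivot[OF insert.prems, of k] insert.hyps(2) by (metis Diff_insert_absorb)
  obtain U where U: "\<forall>i j. A' i j = (\<Sum>m\<in>T. U m i * cnj (U m j))"
    using insert.IH[OF A'] by blast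
  have "(\<Sum>m\<in>T. (U(k := u)) m i * cnj ((U(k := u)) m j)) = (\<Sum>m\<in>T. U m i * cnj (U m j))" for i j
    using insert.hyps(2) by (intro sum.cong) auto
  then have "A i j = (\<Sum>m\<in>insert k T. (U(k := u)) m i * cnj ((U(k := u)) m j))" for i j
    using insert.hyps split U by simp
  then show ?case by blast
qed

lemma psd_gram_decomposition:
  fixes A :: "'a::finite cmat"
  assumes "psd A"
  obtains U :: "'a \<Rightarrow> 'a \<Rightarrow> complex" where "\<And>i j. A i j = (\<Sum>k\<in>UNIV. U k i * cnj (U k j))"
  using psd_gram_decomposition_on[of UNIV A] assms by auto

lemma psd_if_gram:
  fixes U :: "'c::finite \<Rightarrow> 'a::finite \<Rightarrow> complex"
  assumes "\<And>i j. A i j = (\<Sum>k\<in>UNIV. U k i * cnj (U k j))"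
  shows "psd A"
  unfolding psd_iff_qform
proof
  fix v
  have "qform A v = (\<Sum>i\<in>UNIV. \<Sum>j\<in>UNIV. \<Sum>k\<in>UNIV. (cnj (v i) * U k i) * (cnj (U k j) * v j))"
    unfolding qform_def assms by (simp add: sum_distrib_left sum_distrib_right algebra_simps)
  also have "\<dots> = (\<Sum>k\<in>UNIV. (\<Sum>i\<in>UNIV. cnj (v i) * U k i) * (\<Sum>j\<in>UNIV. cnj (U k j) * v j))"
    by (subst sum_swap_innermost) (simp add: sum_product)
  also have "\<dots> = (\<Sum>k\<in>UNIV. cnj (\<Sum>j\<in>UNIV. cnj (U k j) * v j) * (\<Sum>j\<in>UNIV. cnj (U k j) * v j))"
    by (simp add: mult.commute)
  finally show "0 \<le> qform A v" by (simp only:) (intro sum_nonneg cnj_mult_self_nonneg)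
qed

lemma psd_scaled_rank_one: "c \<ge> 0 \<Longrightarrow> psd (\<lambda>i j. complex_of_real c * (v i * cnj (v j)))"
  by (rule psd_if_gram[of _ "\<lambda>_::unit. \<lambda>i. complex_of_real (sqrt c) * v i"])
     (simp add: algebra_simps flip: of_real_mult)

lemma psd_tensor:
  assumes "psd (A::'a::finite cmat)" "psd (B::'b::finite cmat)"
  shows "psd (tensor A B)"
proof -
  obtain U :: "'a cmat" where U: "\<And>i j. A i j = (\<Sum>k\<in>UNIV. U k i * cnj (U k j))"
    using psd_gram_decomposition[OF assms(1)] by blast
  obtain W :: "'b cmat" where W: "\<And>i j. B i j = (\<Sum>k\<in>UNIV. W k i * cnj (W k j))"
    using psd_gram_decomposition[OF assms(2)] by blast
  show ?thesis
  proof (rule psd_if_gram[of _ "tensor U W"])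
    fix p q :: "'a \<times> 'b"
    obtain i k j l where pq: "p = (i, k)" "q = (j, l)" by fastforce
    have "tensor A B p q = (\<Sum>m\<in>UNIV. \<Sum>n\<in>UNIV. (U m i * cnj (U m j)) * (W n k * cnj (W n l)))"
      unfolding tensor_def pq U W by (simp add: sum_product)
    also have "\<dots> = (\<Sum>r\<in>UNIV. tensor U W r p * cnj (tensor U W r q))"
      unfolding sum_UNIV_prod tensor_def pq by (simp add: algebra_simps)
    finally show "tensor A B p q = (\<Sum>r\<in>UNIV. tensor U W r p * cnj (tensor U W r q))" .
  qed
qed

lemma mtrace_tensor: "mtrace (tensor A B) = mtrace A * mtrace B"
  unfolding mtrace_def tensor_def by (simp add: sum_UNIV_prod sum_product)

lemma density_tensor: "density \<rho>1 \<Longrightarrow> density \<rho>2 \<Longrightarrow> density (tensor \<rho>1 \<rho>2)"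
  by (simp add: density_def psd_tensor mtrace_tensor)

lemma incoherent_tensor: "incoherent \<sigma>1 \<Longrightarrow> incoherent \<sigma>2 \<Longrightarrow> incoherent (tensor \<sigma>1 \<sigma>2)"
  unfolding incoherent_def using density_tensor by (auto simp: tensor_def)

section \<open>The Hilbert--Schmidt pairing\<close>

definition hs_inner :: "('a::finite) cmat \<Rightarrow> 'a cmat \<Rightarrow> real" where
  "hs_inner A B = Re (\<Sum>i\<in>UNIV. \<Sum>j\<in>UNIV. cnj (A i j) * B i j)"

lemma hs_inner_diff: "hs_inner A (\<lambda>i j. X i j - Y i j) = hs_inner A X - hs_inner A Y"
  unfolding hs_inner_def by (simp add: right_diff_distrib sum_subtractf)

lemma hs_inner_zero: "hs_inner A (\<lambda>i j. 0) = 0"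
  by (simp add: hs_inner_def)

lemma hs_inner_scale:
  "hs_inner A (\<lambda>i j. complex_of_real c * X i j) = c * hs_inner A X"
  "hs_inner (\<lambda>i j. complex_of_real c * A i j) X = c * hs_inner A X"
  unfolding hs_inner_def by (simp_all add: sum_distrib_left algebra_simps)

lemma hs_inner_diag_mat: "hs_inner A (diag_mat lam) = (\<Sum>i\<in>UNIV. Re (A i i) * lam i)"
  unfolding hs_inner_def diag_mat_def by (simp add: mult_delta_right sum_if_zero)

lemma hs_inner_rank_one: "hs_inner A (\<lambda>i j. v i * cnj (v j)) = Re (qform A v)"
proof -
  have "(\<Sum>i\<in>UNIV. \<Sum>j\<in>UNIV. cnj (A i j) * (v i * cnj (v j))) = cnj (qform A v)"
    unfolding qform_def by (simp add: algebra_simps)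
  then show ?thesis unfolding hs_inner_def by simp
qed

lemma hs_inner_psd_nonneg:
  fixes M P :: "('a::finite) cmat"
  assumes "psd M" "psd P"
  shows "0 \<le> hs_inner M P"
proof -
  obtain U :: "'a cmat" where U: "\<And>i j. P i j = (\<Sum>k\<in>UNIV. U k i * cnj (U k j))"
    using psd_gram_decomposition[OF assms(2)] by blast
  have "(\<Sum>i\<in>UNIV. \<Sum>j\<in>UNIV. cnj (M i j) * P i j) =
        (\<Sum>i\<in>UNIV. \<Sum>j\<in>UNIV. \<Sum>k\<in>UNIV. cnj (M i j) * (U k i * cnj (U k j)))"
    unfolding U by (simp add: sum_distrib_left)
  also have "\<dots> = (\<Sum>k\<in>UNIV. cnj (qform M (U k)))"
    unfolding qform_def by (subst sum_swap_innermost) (simp add: algebra_simps)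
  finally have "hs_inner M P = (\<Sum>k\<in>UNIV. Re (qform M (U k)))"
    unfolding hs_inner_def by simp
  also have "\<dots> \<ge> 0" using assms(1) by (intro sum_nonneg) (simp add: psd_iff_qform nonneg_complex_iff)
  finally show ?thesis .
qed

lemma hermitian_hs_inner_real:
  assumes "hermitian A" "hermitian B"
  shows "Im (\<Sum>i\<in>UNIV. \<Sum>j\<in>UNIV. cnj (A i j) * B i j) = 0"
proof -
  have "cnj (\<Sum>i\<in>UNIV. \<Sum>j\<in>UNIV. cnj (A i j) * B i j) = (\<Sum>i\<in>UNIV. \<Sum>j\<in>UNIV. cnj (A j i) * B j i)"
    by (simp add: hermitian_cnj[OF assms(1)] hermitian_cnj[OF assms(2)])
  also have "\<dots> = (\<Sum>i\<in>UNIV. \<Sum>j\<in>UNIV. cnj (A i j) * B i j)" by (rule sum.swap)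
  finally show ?thesis by (metis Reals_cnj_iff complex_is_Real_iff)
qed

lemma hs_inner_tensor:
  fixes A1 B1 :: "'a::finite cmat" and A2 B2 :: "'b::finite cmat"
  assumes "hermitian A1" "hermitian B1" "hermitian A2" "hermitian B2"
  shows "hs_inner (tensor A1 A2) (tensor B1 B2) = hs_inner A1 B1 * hs_inner A2 B2"
proof -
  define S1 where "S1 = (\<Sum>i\<in>UNIV. \<Sum>j\<in>UNIV. cnj (A1 i j) * B1 i j)"
  define S2 where "S2 = (\<Sum>i\<in>UNIV. \<Sum>j\<in>UNIV. cnj (A2 i j) * B2 i j)"
  have "(\<Sum>p\<in>UNIV. \<Sum>q\<in>UNIV. cnj (tensor A1 A2 p q) * tensor B1 B2 p q) =
      (\<Sum>i\<in>UNIV. \<Sum>k\<in>UNIV. \<Sum>j\<in>UNIV. \<Sum>l\<in>UNIV. (cnj (A1 i j) * B1 i j) * (cnj (A2 k l) * B2 k l))"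
    unfolding tensor_def by (simp add: sum_UNIV_prod algebra_simps)
  also have "\<dots> = (\<Sum>i\<in>UNIV. \<Sum>j\<in>UNIV. \<Sum>k\<in>UNIV. \<Sum>l\<in>UNIV. (cnj (A1 i j) * B1 i j) * (cnj (A2 k l) * B2 k l))"
    by (rule sum.cong[OF refl], rule sum.swap)
  also have "\<dots> = (\<Sum>i\<in>UNIV. \<Sum>j\<in>UNIV. (cnj (A1 i j) * B1 i j) * S2)"
    unfolding S2_def by (simp add: sum_distrib_left)
  also have "\<dots> = S1 * S2" unfolding S1_def by (simp add: sum_distrib_right)
  finally have "hs_inner (tensor A1 A2) (tensor B1 B2) = Re (S1 * S2)" unfolding hs_inner_def by simp
  also have "\<dots> = Re S1 * Re S2"
    using hermitian_hs_inner_real[OF assms(1,2)] hermitian_hs_inner_real[OF assms(3,4)]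
    unfolding S1_def S2_def by simp
  finally show ?thesis unfolding hs_inner_def S1_def S2_def .
qed

section \<open>Duality for diagonal domination\<close>

lemma affine_nonneg_on_pos:
  fixes c0 c1 :: real
  assumes "\<And>t. 0 < t \<Longrightarrow> 0 \<le> c0 + t * c1"
  shows "0 \<le> c0" and "0 \<le> c1"
proof -
  show "0 \<le> c1"
  proof (rule ccontr)
    assume neg: "\<not> 0 \<le> c1"
    have "0 \<le> c0 + ((\<bar>c0\<bar> + 1) / - c1) * c1" using neg by (intro assms divide_pos_pos) auto
    also have "\<dots> = c0 - (\<bar>c0\<bar> + 1)" using neg by simp
    finally show False by simp
  qed
  show "0 \<le> c0"
  proof (rule ccontr)
    assume neg: "\<not> 0 \<le> c0"
    define t where "t = - c0 / (2 * (\<bar>c1\<bar> + 1))"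
    have t: "0 < t" using neg unfolding t_def by (intro divide_pos_pos) auto
    have "t * c1 \<le> t * (\<bar>c1\<bar> + 1)" using t by (intro mult_left_mono) auto
    also have "t * (\<bar>c1\<bar> + 1) = - c0 / 2" unfolding t_def by (simp add: field_simps)
    finally have "c0 + t * c1 < 0" using neg by simp
    with assms[OF t] show False by simp
  qed
qed

lemma affine_nonneg_slope_zero:
  fixes c0 c1 :: real
  assumes "\<And>t. 0 \<le> c0 + t * c1"
  shows "c1 = 0"
proof -
  have "0 \<le> c1" by (rule affine_nonneg_on_pos(2)[of c0]) (rule assms)
  moreover have "0 \<le> - c1" by (rule affine_nonneg_on_pos(2)[of c0]) (use assms[of "- _"] in simp)
  ultimately show ?thesis by simp
qed

lemma separating_functional_normal_form:
  assumes sep: "\<And>lam e Q. 0 < e \<Longrightarrow> psd Q \<Longrightarrow>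
      0 \<le> a * (sum lam UNIV - p + e) + (\<Sum>i\<in>UNIV. Re (A i i) * lam i) - hs_inner A \<rho> - hs_inner A Q"
    and herm: "hermitian A"
  shows "0 \<le> a" and "a * p \<le> - hs_inner A \<rho>" and "\<And>i. A i i = - a" and "psd (\<lambda>i j. - A i j)"
proof -
  define gap where "gap = a * (1 - p) - hs_inner A \<rho>"
  have "0 \<le> (- a * p - hs_inner A \<rho>) + e * a" if "0 < e" for e
    using sep[where lam = "\<lambda>_. 0" and e = e and Q = "\<lambda>i j. 0"] psd_zero that
    by (simp add: hs_inner_zero algebra_simps)
  note affine = affine_nonneg_on_pos[OF this]
  then show "0 \<le> a" and "a * p \<le> - hs_inner A \<rho>" by simp_all
  show "A i i = - a" for i
  proof -
    have "0 \<le> gap + t * (a + Re (A i i))" for t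
      using sep[where lam = "\<lambda>x. if x = i then t else 0" and e = 1 and Q = "\<lambda>i j. 0"] psd_zero
      by (simp add: gap_def hs_inner_zero if_distrib[of "\<lambda>x. Re (A _ _) * x"] algebra_simps cong: if_cong)
    then have "a + Re (A i i) = 0" by (rule affine_nonneg_slope_zero)
    then show ?thesis using hermitian_cnj[OF herm, of i i] by (simp add: complex_eq_iff)
  qed
  have "Re (qform A v) \<le> 0" for v
  proof -
    have "0 \<le> gap + t * (- Re (qform A v))" if "0 < t" for t
      using sep[where lam = "\<lambda>_. 0" and e = 1 and Q = "\<lambda>i j. complex_of_real t * (v i * cnj (v j))"]
        psd_scaled_rank_one[of t v] that
      by (simp add: gap_def hs_inner_scale hs_inner_rank_one algebra_simps)
    then have "0 \<le> - Re (qform A v)" by (rule affine_nonneg_on_pos(2))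
    then show ?thesis by simp
  qed
  then show "psd (\<lambda>i j. - A i j)"
    using hermitian_qform_real[OF herm] unfolding psd_iff_qform
    by (simp add: qform_def sum_negf nonneg_complex_iff)
qed

text \<open>A hyperplane \<open>(a, A)\<close> separating the primal slack set from \<open>0\<close> yields the
  dual matrix \<open>-A/a\<close>.\<close>
lemma separating_functional_dual:
  assumes sep: "\<And>lam e Q. 0 < e \<Longrightarrow> psd Q \<Longrightarrow>
      0 \<le> a * (sum lam UNIV - p + e) + (\<Sum>i\<in>UNIV. Re (A i i) * lam i) - hs_inner A \<rho> - hs_inner A Q"
    and herm: "hermitian A" and nz: "a \<noteq> 0 \<or> (\<exists>i j. A i j \<noteq> 0)"
  shows "\<exists>M. psd M \<and> (\<forall>i. M i i = 1) \<and> p \<le> hs_inner M \<rho>"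
proof -
  note nf = separating_functional_normal_form[OF sep herm]
  have "a \<noteq> 0"
  proof
    assume "a = 0"
    then have "- A i j = 0" for i j using psd_zero_diag_row[OF nf(4), of i j] nf(3) by simp
    with nz \<open>a = 0\<close> show False by simp
  qed
  with nf(1) have a: "0 < a" by simp
  define M where "M = (\<lambda>i j. complex_of_real (1 / a) * - A i j)"
  have "psd M" unfolding M_def using psd_scale[OF nf(4), of "1 / a"] a by simp
  moreover have "M i i = 1" for i using a by (simp add: M_def nf(3))
  moreover have "p \<le> hs_inner M \<rho>"
  proof -
    have "hs_inner (\<lambda>i j. - A i j) \<rho> = - hs_inner A \<rho>"
      by (simp add: hs_inner_def sum_negf)
    then have "hs_inner M \<rho> = (- hs_inner A \<rho>) / a"
      unfolding M_def hs_inner_scale by simp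
    moreover have "p * a \<le> - hs_inner A \<rho>" using nf(2) by (simp add: mult.commute)
    ultimately show ?thesis using a by (simp only: pos_le_divide_eq)
  qed
  ultimately show ?thesis by blast
qed

definition mat_of_vec :: "complex ^ ('a \<times> 'a) \<Rightarrow> ('a::finite) cmat" where
  "mat_of_vec z = (\<lambda>i j. z $ (i, j))"

definition vec_of_mat :: "('a::finite) cmat \<Rightarrow> complex ^ ('a \<times> 'a)" where
  "vec_of_mat A = (\<chi> p. A (fst p) (snd p))"

lemma mat_of_vec_of_mat [simp]: "mat_of_vec (vec_of_mat A) = A"
  by (simp add: mat_of_vec_def vec_of_mat_def)

lemma inner_vec_of_mat:
  "inner (a::real, z) (x, vec_of_mat H) = a * x + hs_inner (mat_of_vec z) H"
  unfolding hs_inner_def mat_of_vec_def vec_of_mat_def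
  by (simp add: inner_vec_def inner_complex_def sum_UNIV_prod)

lemma vec_of_mat_combination:
  "u *\<^sub>R vec_of_mat X + v *\<^sub>R vec_of_mat Y =
     vec_of_mat (\<lambda>i j. complex_of_real u * X i j + complex_of_real v * Y i j)"
  unfolding vec_eq_iff vec_of_mat_def by (simp add: scaleR_conv_of_real[where 'a = complex])

definition primal_slack_set :: "('a::finite) cmat \<Rightarrow> real \<Rightarrow> (real \<times> (complex ^ ('a \<times> 'a))) set" where
  "primal_slack_set \<rho> p = {(sum lam UNIV - p + e, vec_of_mat (\<lambda>i j. diag_mat lam i j - \<rho> i j - Q i j))
     | lam e Q. 0 < e \<and> psd Q}"

lemma convex_primal_slack_set: "convex (primal_slack_set \<rho> p)"
proof (rule convexI)
  fix x y and u v :: real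
  assume "x \<in> primal_slack_set \<rho> p" "y \<in> primal_slack_set \<rho> p" and uv: "0 \<le> u" "0 \<le> v" "u + v = 1"
  then obtain l1 e1 Q1 l2 e2 Q2 where
      x: "x = (sum l1 UNIV - p + e1, vec_of_mat (\<lambda>i j. diag_mat l1 i j - \<rho> i j - Q1 i j))"
    and y: "y = (sum l2 UNIV - p + e2, vec_of_mat (\<lambda>i j. diag_mat l2 i j - \<rho> i j - Q2 i j))"
    and pos: "0 < e1" "0 < e2" "psd Q1" "psd Q2"
    unfolding primal_slack_set_def by blast
  have v: "v = 1 - u" using uv(3) by simp
  define lam where "lam = (\<lambda>i. u * l1 i + v * l2 i)"
  define Q where "Q = (\<lambda>i j. complex_of_real u * Q1 i j + complex_of_real v * Q2 i j)"
  have "sum lam UNIV = u * sum l1 UNIV + v * sum l2 UNIV"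
    by (simp add: lam_def sum.distrib sum_distrib_left)
  then have gap: "u * (sum l1 UNIV - p + e1) + v * (sum l2 UNIV - p + e2) = sum lam UNIV - p + (u * e1 + v * e2)"
    unfolding v by (simp add: algebra_simps)
  have "complex_of_real u * (diag_mat l1 i j - \<rho> i j - Q1 i j) + complex_of_real v * (diag_mat l2 i j - \<rho> i j - Q2 i j)
      = diag_mat lam i j - \<rho> i j - Q i j" for i j
    unfolding lam_def Q_def diag_mat_def v by (simp add: algebra_simps)
  then have slack: "u *\<^sub>R snd x + v *\<^sub>R snd y = vec_of_mat (\<lambda>i j. diag_mat lam i j - \<rho> i j - Q i j)"
    unfolding x y snd_conv vec_of_mat_combination by presburger
  have "0 < u * e1 + v * e2"
    using pos uv by (cases "u = 0") (auto intro: add_pos_nonneg)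
  moreover have "psd Q" unfolding Q_def by (rule psd_nonneg_combination) (use pos uv in auto)
  ultimately show "u *\<^sub>R x + v *\<^sub>R y \<in> primal_slack_set \<rho> p"
    unfolding primal_slack_set_def using gap slack
    by (intro CollectI exI[of _ lam] exI[of _ "u * e1 + v * e2"] exI[of _ Q])
       (simp add: prod_eq_iff x y)
qed

lemma zero_notin_primal_slack_set:
  assumes primal: "\<And>lam. psd (\<lambda>i j. diag_mat lam i j - \<rho> i j) \<Longrightarrow> p \<le> sum lam UNIV"
  shows "0 \<notin> primal_slack_set \<rho> p"
proof
  assume "0 \<in> primal_slack_set \<rho> p"
  then obtain lam e Q where gap: "sum lam UNIV - p + e = 0" and pos: "0 < e" "psd Q"
    and slack: "vec_of_mat (\<lambda>i j. diag_mat lam i j - \<rho> i j - Q i j) = 0"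
    unfolding primal_slack_set_def by (auto simp: zero_prod_def)
  have "diag_mat lam i j - \<rho> i j - Q i j = 0" for i j
    using arg_cong[OF slack, of "\<lambda>z. z $ (i, j)"] by (simp add: vec_of_mat_def)
  then have "(\<lambda>i j. diag_mat lam i j - \<rho> i j) = Q" by (simp add: fun_eq_iff)
  then show False using primal[of lam] gap pos by simp
qed

lemma subspace_hermitian_slack:
  "subspace {z :: real \<times> (complex ^ ('a::finite \<times> 'a)). hermitian (mat_of_vec (snd z))}"
  unfolding subspace_def
proof (intro conjI ballI allI; clarsimp)
  show "hermitian (mat_of_vec (0 :: complex ^ ('a \<times> 'a)))"
    by (simp add: hermitian_def mat_of_vec_def)
  fix x y :: "complex ^ ('a \<times> 'a)" and c :: real
  assume "hermitian (mat_of_vec x)" "hermitian (mat_of_vec y)"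
  then show "hermitian (mat_of_vec (x + y))" "hermitian (mat_of_vec (c *\<^sub>R x))"
    using hermitian_add hermitian_scale[of _ c]
    by (simp_all add: mat_of_vec_def scaleR_conv_of_real[where 'a = complex])
qed

lemma primal_slack_set_hermitian:
  assumes "hermitian \<rho>"
  shows "primal_slack_set \<rho> p \<subseteq> {z. hermitian (mat_of_vec (snd z))}"
  unfolding primal_slack_set_def
  using hermitian_diff[OF hermitian_diff[OF hermitian_diag_mat assms] psd_hermitian] by auto

lemma psd_unit_diag_dual:
  fixes \<rho> :: "'a::finite cmat"
  assumes herm: "hermitian \<rho>"
    and primal: "\<And>lam. psd (\<lambda>i j. diag_mat lam i j - \<rho> i j) \<Longrightarrow> p \<le> sum lam UNIV"
  shows "\<exists>M. psd M \<and> (\<forall>i. M i i = 1) \<and> p \<le> hs_inner M \<rho>"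
proof -
  have "primal_slack_set \<rho> p \<noteq> {}"
    unfolding primal_slack_set_def using psd_zero zero_less_one by blast
  then obtain z where z: "z \<in> span (primal_slack_set \<rho> p)" "z \<noteq> 0"
      "\<And>x. x \<in> primal_slack_set \<rho> p \<Longrightarrow> 0 \<le> z \<bullet> x"
    using separating_hyperplane_set_0_inspan[OF convex_primal_slack_set _ zero_notin_primal_slack_set[OF primal]]
    by blast
  obtain a w where aw: "z = (a, w)" by fastforce
  have herm_w: "hermitian (mat_of_vec w)"
    using span_minimal[OF primal_slack_set_hermitian[OF herm, of p] subspace_hermitian_slack] z(1) aw by auto
  have sep: "0 \<le> a * (sum lam UNIV - p + e) + (\<Sum>i\<in>UNIV. Re (mat_of_vec w i i) * lam i)
      - hs_inner (mat_of_vec w) \<rho> - hs_inner (mat_of_vec w) Q" if "0 < e" "psd Q" for lam e Q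
  proof -
    have "0 \<le> z \<bullet> (sum lam UNIV - p + e, vec_of_mat (\<lambda>i j. diag_mat lam i j - \<rho> i j - Q i j))"
      using that by (intro z(3)) (auto simp: primal_slack_set_def)
    then show ?thesis unfolding aw inner_vec_of_mat hs_inner_diff hs_inner_diag_mat by simp
  qed
  have nz: "a \<noteq> 0 \<or> (\<exists>i j. mat_of_vec w i j \<noteq> 0)"
  proof -
    have "a \<noteq> 0 \<or> w \<noteq> 0" using z(2) aw by (auto simp: zero_prod_def)
    then show ?thesis by (auto simp: mat_of_vec_def vec_eq_iff)
  qed
  show ?thesis by (rule separating_functional_dual[OF sep herm_w nz])
qed

section \<open>Admissible exponents of the max-relative entropy of coherence\<close>

lemma incoherent_diag_mat:
  assumes "\<And>i. 0 \<le> lam i" "sum lam UNIV = 1"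
  shows "incoherent (diag_mat lam)"
proof -
  have "mtrace (diag_mat lam) = 1"
    using assms(2) unfolding mtrace_def diag_mat_def by (simp flip: of_real_sum)
  then show ?thesis using psd_diag_mat[of lam] assms(1)
    unfolding incoherent_def density_def by (simp add: diag_mat_def)
qed

lemma incoherent_eq_diag_mat:
  assumes "incoherent \<sigma>"
  shows "\<sigma> = diag_mat (\<lambda>i. Re (\<sigma> i i))" and "(\<Sum>i\<in>UNIV. Re (\<sigma> i i)) = 1"
proof -
  have "psd \<sigma>" using assms by (simp add: incoherent_def density_def)
  then show "\<sigma> = diag_mat (\<lambda>i. Re (\<sigma> i i))"
    using assms psd_diag_nonneg_real(1) unfolding incoherent_def diag_mat_def by (auto simp: fun_eq_iff)
  show "(\<Sum>i\<in>UNIV. Re (\<sigma> i i)) = 1"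
    using assms unfolding incoherent_def density_def mtrace_def by (metis Re_sum one_complex.sel(1))
qed

definition Cmax_exponents :: "('a::finite) cmat \<Rightarrow> real set" where
  "Cmax_exponents \<rho> = {l. 0 \<le> l \<and>
     (\<exists>\<sigma>. incoherent \<sigma> \<and> loewner_le \<rho> (\<lambda>i j. complex_of_real (2 powr l) * \<sigma> i j))}"

lemma bdd_below_Cmax_exponents: "bdd_below (Cmax_exponents \<rho>)"
  unfolding Cmax_exponents_def by (rule bdd_belowI[of _ 0]) auto

lemma Cmax_eq_Inf_exponents:
  fixes \<rho> :: "'a::finite cmat"
  assumes ne: "Cmax_exponents \<rho> \<noteq> {}"
  shows "Cmax \<rho> = ereal (Inf (Cmax_exponents \<rho>))"
proof -
  have "Cmax \<rho> = Inf (ereal ` Cmax_exponents \<rho>)"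
  proof (rule antisym)
    show "Cmax \<rho> \<le> Inf (ereal ` Cmax_exponents \<rho>)"
    proof (rule Inf_greatest)
      fix x assume "x \<in> ereal ` Cmax_exponents \<rho>"
      then obtain l \<sigma> where x: "x = ereal l" and l: "0 \<le> l" and \<sigma>: "incoherent \<sigma>"
        and le: "loewner_le \<rho> (\<lambda>i j. complex_of_real (2 powr l) * \<sigma> i j)"
        unfolding Cmax_exponents_def by auto
      have "Cmax \<rho> \<le> Dmax \<rho> \<sigma>" unfolding Cmax_def using \<sigma> by (intro INF_lower) simp
      also have "Dmax \<rho> \<sigma> \<le> ereal l" unfolding Dmax_def using l le by (intro Inf_lower) auto
      finally show "Cmax \<rho> \<le> x" using x by simp
    qed
    show "Inf (ereal ` Cmax_exponents \<rho>) \<le> Cmax \<rho>"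
      unfolding Cmax_def Dmax_def Cmax_exponents_def
      by (intro INF_greatest Inf_superset_mono) auto
  qed
  also have "\<dots> = ereal (Inf (Cmax_exponents \<rho>))"
    using ereal_Inf'[OF bdd_below_Cmax_exponents ne] by simp
  finally show ?thesis .
qed

lemma Cmax_exponents_tensor:
  assumes "l1 \<in> Cmax_exponents \<rho>1" "l2 \<in> Cmax_exponents \<rho>2" "psd \<rho>1" "psd \<rho>2"
  shows "l1 + l2 \<in> Cmax_exponents (tensor \<rho>1 \<rho>2)"
proof -
  obtain \<sigma>1 where \<sigma>1: "incoherent \<sigma>1" "psd (\<lambda>i j. complex_of_real (2 powr l1) * \<sigma>1 i j - \<rho>1 i j)"
    and l1: "0 \<le> l1"
    using assms(1) unfolding Cmax_exponents_def loewner_le_def by auto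
  obtain \<sigma>2 where \<sigma>2: "incoherent \<sigma>2" "psd (\<lambda>i j. complex_of_real (2 powr l2) * \<sigma>2 i j - \<rho>2 i j)"
    and l2: "0 \<le> l2"
    using assms(2) unfolding Cmax_exponents_def loewner_le_def by auto
  define X2 where "X2 = (\<lambda>i j. complex_of_real (2 powr l2) * \<sigma>2 i j)"
  have "psd X2" using psd_add[OF \<sigma>2(2) assms(4)] unfolding X2_def by simp
  \<comment> \<open>\<open>X\<^sub>1 \<otimes> X\<^sub>2 - \<rho>\<^sub>1 \<otimes> \<rho>\<^sub>2 = (X\<^sub>1 - \<rho>\<^sub>1) \<otimes> X\<^sub>2 + \<rho>\<^sub>1 \<otimes> (X\<^sub>2 - \<rho>\<^sub>2)\<close> with \<open>X\<^sub>k = 2 powr l\<^sub>k \<sigma>\<^sub>k\<close>\<close>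
  then have "psd (\<lambda>p q. tensor (\<lambda>i j. complex_of_real (2 powr l1) * \<sigma>1 i j - \<rho>1 i j) X2 p q
      + tensor \<rho>1 (\<lambda>i j. X2 i j - \<rho>2 i j) p q)"
    by (intro psd_add psd_tensor \<sigma>1(2) assms(3)) (use \<sigma>2(2) in \<open>simp_all add: X2_def\<close>)
  also have "(\<lambda>p q. tensor (\<lambda>i j. complex_of_real (2 powr l1) * \<sigma>1 i j - \<rho>1 i j) X2 p q
      + tensor \<rho>1 (\<lambda>i j. X2 i j - \<rho>2 i j) p q)
      = (\<lambda>p q. complex_of_real (2 powr (l1 + l2)) * tensor \<sigma>1 \<sigma>2 p q - tensor \<rho>1 \<rho>2 p q)"
    unfolding tensor_def X2_def by (auto simp: fun_eq_iff powr_add algebra_simps)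
  finally show ?thesis
    unfolding Cmax_exponents_def loewner_le_def using l1 l2 incoherent_tensor[OF \<sigma>1(1) \<sigma>2(1)] by auto
qed

text \<open>The incoherent witness is \<open>\<Lambda> / tr \<Lambda>\<close>.\<close>
lemma log_trace_in_Cmax_exponents:
  assumes dom: "psd (\<lambda>i j. diag_mat lam i j - \<rho> i j)" and lam: "\<And>i. 0 \<le> lam i"
    and s: "1 \<le> sum lam UNIV"
  shows "log 2 (sum lam UNIV) \<in> Cmax_exponents \<rho>"
proof -
  define \<sigma> where "\<sigma> = diag_mat (\<lambda>i. lam i / sum lam UNIV)"
  have "incoherent \<sigma>"
    unfolding \<sigma>_def using lam s
    by (intro incoherent_diag_mat) (simp_all flip: sum_divide_distrib)
  moreover have "complex_of_real (2 powr log 2 (sum lam UNIV)) * \<sigma> i j = diag_mat lam i j" for i j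
  proof -
    have "(\<lambda>k. 2 powr log 2 (sum lam UNIV) * (lam k / sum lam UNIV)) = lam" using s by auto
    moreover have "complex_of_real c * diag_mat f i j = diag_mat (\<lambda>k. c * f k) i j" for c f
      by (simp add: diag_mat_def)
    ultimately show ?thesis unfolding \<sigma>_def by simp
  qed
  ultimately show ?thesis
    unfolding Cmax_exponents_def loewner_le_def using dom s by auto
qed

lemma norm_mult_le_sum_squares:
  fixes v :: "'a::finite \<Rightarrow> complex"
  shows "cmod (v i) * cmod (v j) \<le> (\<Sum>k\<in>UNIV. (cmod (v k))\<^sup>2)"
proof -
  have "(cmod (v i))\<^sup>2 \<le> (\<Sum>k\<in>UNIV. (cmod (v k))\<^sup>2)" "(cmod (v j))\<^sup>2 \<le> (\<Sum>k\<in>UNIV. (cmod (v k))\<^sup>2)"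
    by (rule member_le_sum; simp)+
  moreover have "2 * (cmod (v i) * cmod (v j)) \<le> (cmod (v i))\<^sup>2 + (cmod (v j))\<^sup>2"
    using sum_squares_bound[of "cmod (v i)" "cmod (v j)"] by (simp add: power2_eq_square)
  ultimately show ?thesis by linarith
qed

lemma Re_qform_le:
  "Re (qform \<rho> v) \<le> (\<Sum>i\<in>UNIV. \<Sum>j\<in>UNIV. cmod (\<rho> i j)) * (\<Sum>k\<in>UNIV. (cmod (v k))\<^sup>2)"
proof -
  have "Re (qform \<rho> v) \<le> (\<Sum>i\<in>UNIV. \<Sum>j\<in>UNIV. cmod (cnj (v i) * \<rho> i j * v j))"
    unfolding qform_def
    by (rule order_trans[OF complex_Re_le_cmod order_trans[OF norm_sum sum_mono[OF norm_sum]]])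
  also have "\<dots> \<le> (\<Sum>i\<in>UNIV. \<Sum>j\<in>UNIV. cmod (\<rho> i j) * (\<Sum>k\<in>UNIV. (cmod (v k))\<^sup>2))"
  proof (intro sum_mono)
    fix i j
    have "cmod (\<rho> i j) * (cmod (v i) * cmod (v j)) \<le> cmod (\<rho> i j) * (\<Sum>k\<in>UNIV. (cmod (v k))\<^sup>2)"
      by (intro mult_left_mono norm_mult_le_sum_squares) simp
    then show "cmod (cnj (v i) * \<rho> i j * v j) \<le> cmod (\<rho> i j) * (\<Sum>k\<in>UNIV. (cmod (v k))\<^sup>2)"
      by (simp add: norm_mult algebra_simps)
  qed
  finally show ?thesis by (simp add: sum_distrib_right)
qed

lemma psd_diag_const_minus_hermitian:
  assumes "hermitian \<rho>"
  shows "psd (\<lambda>i j. diag_mat (\<lambda>_. 1 + (\<Sum>i\<in>UNIV. \<Sum>j\<in>UNIV. cmod (\<rho> i j))) i j - \<rho> i j)"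
    (is "psd (\<lambda>i j. diag_mat (\<lambda>_. ?c) i j - \<rho> i j)")
  unfolding psd_iff_qform nonneg_complex_iff
proof (intro allI conjI)
  fix v
  have "qform (\<lambda>i j. diag_mat (\<lambda>_. ?c) i j - \<rho> i j) v = qform (diag_mat (\<lambda>_. ?c)) v - qform \<rho> v"
    unfolding qform_def by (simp add: algebra_simps sum_subtractf)
  moreover note qform_diag_mat[of "\<lambda>_. ?c" v]
  moreover have "Re (qform \<rho> v) \<le> ?c * (\<Sum>k\<in>UNIV. (cmod (v k))\<^sup>2)"
    using Re_qform_le[of \<rho> v] sum_nonneg[of UNIV "\<lambda>k. (cmod (v k))\<^sup>2"] by (simp add: distrib_right)
  ultimately show "0 \<le> Re (qform (\<lambda>i j. diag_mat (\<lambda>_. ?c) i j - \<rho> i j) v)"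
    by (simp add: sum_distrib_left)
  show "Im (qform (\<lambda>i j. diag_mat (\<lambda>_. ?c) i j - \<rho> i j) v) = 0"
    by (intro hermitian_qform_real hermitian_diff hermitian_diag_mat assms)
qed

lemma Cmax_exponents_nonempty:
  fixes \<rho> :: "'a::finite cmat"
  assumes "density \<rho>"
  shows "Cmax_exponents \<rho> \<noteq> {}"
proof -
  define c where "c = 1 + (\<Sum>i\<in>UNIV. \<Sum>j\<in>UNIV. cmod (\<rho> i j))"
  have c: "1 \<le> c" unfolding c_def by (simp add: sum_nonneg)
  have "psd (\<lambda>i j. diag_mat (\<lambda>_. c) i j - \<rho> i j)"
    unfolding c_def using assms by (intro psd_diag_const_minus_hermitian psd_hermitian) (simp add: density_def)
  moreover have "1 \<le> sum (\<lambda>_. c) (UNIV :: 'a set)"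
  proof -
    have "1 \<le> real CARD('a)" by (simp add: Suc_leI)
    then show ?thesis using mult_mono[of 1 "real CARD('a)" 1 c] c by simp
  qed
  ultimately show ?thesis using log_trace_in_Cmax_exponents c by fastforce
qed

lemma powr_Inf_Cmax_exponents_le:
  assumes \<rho>: "density \<rho>" and dom: "psd (\<lambda>i j. diag_mat lam i j - \<rho> i j)"
  shows "2 powr Inf (Cmax_exponents \<rho>) \<le> sum lam UNIV"
proof -
  have diag_le: "Re (\<rho> i i) \<le> lam i" for i
    using dom[unfolded psd_iff_qform, THEN spec, of "unit_vec i"]
    by (simp add: qform_unit_vec diag_mat_def nonneg_complex_iff)
  moreover have "0 \<le> Re (\<rho> i i)" for i
    using \<rho> psd_diag_nonneg_real(2)[of \<rho>] by (simp add: density_def)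
  ultimately have lam: "0 \<le> lam i" for i by (meson order_trans)
  have "(\<Sum>i\<in>UNIV. Re (\<rho> i i)) = 1"
    using \<rho> unfolding density_def mtrace_def by (metis Re_sum one_complex.sel(1))
  moreover have "(\<Sum>i\<in>UNIV. Re (\<rho> i i)) \<le> sum lam UNIV" by (rule sum_mono) (rule diag_le)
  ultimately have s: "1 \<le> sum lam UNIV" by simp
  have "Inf (Cmax_exponents \<rho>) \<le> log 2 (sum lam UNIV)"
    by (intro cInf_lower bdd_below_Cmax_exponents log_trace_in_Cmax_exponents dom lam s)
  then show ?thesis using s by (simp add: le_log_iff)
qed

lemma Cmax_dual_witness:
  assumes "density \<rho>"
  obtains M where "psd M" "\<And>i. M i i = 1" "2 powr Inf (Cmax_exponents \<rho>) \<le> hs_inner M \<rho>"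
  using psd_unit_diag_dual[of \<rho> "2 powr Inf (Cmax_exponents \<rho>)"] powr_Inf_Cmax_exponents_le[OF assms]
    psd_hermitian assms that by (auto simp: density_def)

lemma hs_inner_le_powr_Cmax_exponent:
  assumes M: "psd M" "\<And>i. M i i = 1" and l: "l \<in> Cmax_exponents \<rho>"
  shows "hs_inner M \<rho> \<le> 2 powr l"
proof -
  obtain \<sigma> where \<sigma>: "incoherent \<sigma>"
    and dom: "psd (\<lambda>i j. complex_of_real (2 powr l) * \<sigma> i j - \<rho> i j)"
    using l unfolding Cmax_exponents_def loewner_le_def by auto
  have "hs_inner M \<sigma> = 1"
    by (subst incoherent_eq_diag_mat(1)[OF \<sigma>]) (simp add: hs_inner_diag_mat M(2) incoherent_eq_diag_mat(2)[OF \<sigma>])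
  moreover have "0 \<le> hs_inner M (\<lambda>i j. complex_of_real (2 powr l) * \<sigma> i j - \<rho> i j)"
    by (rule hs_inner_psd_nonneg[OF M(1) dom])
  ultimately show ?thesis by (simp add: hs_inner_diff hs_inner_scale)
qed

lemma Inf_Cmax_exponents_tensor_le:
  assumes "density \<rho>1" "density \<rho>2"
  shows "Inf (Cmax_exponents (tensor \<rho>1 \<rho>2)) \<le> Inf (Cmax_exponents \<rho>1) + Inf (Cmax_exponents \<rho>2)"
proof -
  let ?I = "Inf (Cmax_exponents (tensor \<rho>1 \<rho>2))"
  have sum: "?I \<le> l1 + l2" if "l1 \<in> Cmax_exponents \<rho>1" "l2 \<in> Cmax_exponents \<rho>2" for l1 l2
    using assms by (intro cInf_lower bdd_below_Cmax_exponents Cmax_exponents_tensor that) (simp_all add: density_def)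
  have "?I - l2 \<le> Inf (Cmax_exponents \<rho>1)" if "l2 \<in> Cmax_exponents \<rho>2" for l2
    using sum[OF _ that] Cmax_exponents_nonempty[OF assms(1)] by (intro cInf_greatest) (auto simp: algebra_simps)
  then have "?I - Inf (Cmax_exponents \<rho>1) \<le> Inf (Cmax_exponents \<rho>2)"
    using Cmax_exponents_nonempty[OF assms(2)] by (intro cInf_greatest) (auto simp: algebra_simps)
  then show ?thesis by simp
qed

lemma Inf_Cmax_exponents_tensor_ge:
  assumes "density \<rho>1" "density \<rho>2"
  shows "Inf (Cmax_exponents \<rho>1) + Inf (Cmax_exponents \<rho>2) \<le> Inf (Cmax_exponents (tensor \<rho>1 \<rho>2))"
proof (rule cInf_greatest[OF Cmax_exponents_nonempty[OF density_tensor[OF assms]]])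
  fix l assume l: "l \<in> Cmax_exponents (tensor \<rho>1 \<rho>2)"
  obtain M1 where M1: "psd M1" "\<And>i. M1 i i = 1" "2 powr Inf (Cmax_exponents \<rho>1) \<le> hs_inner M1 \<rho>1"
    using Cmax_dual_witness[OF assms(1)] by blast
  obtain M2 where M2: "psd M2" "\<And>i. M2 i i = 1" "2 powr Inf (Cmax_exponents \<rho>2) \<le> hs_inner M2 \<rho>2"
    using Cmax_dual_witness[OF assms(2)] by blast
  have herm: "hermitian M1" "hermitian \<rho>1" "hermitian M2" "hermitian \<rho>2"
    using M1 M2 assms psd_hermitian by (auto simp: density_def)
  have "2 powr (Inf (Cmax_exponents \<rho>1) + Inf (Cmax_exponents \<rho>2)) \<le> hs_inner M1 \<rho>1 * hs_inner M2 \<rho>2"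
    unfolding powr_add by (rule mult_mono[OF M1(3) M2(3)]) (auto intro: order_trans[OF _ M1(3)])
  also have "\<dots> = hs_inner (tensor M1 M2) (tensor \<rho>1 \<rho>2)"
    by (rule hs_inner_tensor[OF herm, symmetric])
  also have "\<dots> \<le> 2 powr l"
    by (rule hs_inner_le_powr_Cmax_exponent[OF psd_tensor[OF M1(1) M2(1)] _ l])
       (simp add: tensor_def M1(2) M2(2) split: prod.split)
  finally show "Inf (Cmax_exponents \<rho>1) + Inf (Cmax_exponents \<rho>2) \<le> l" by simp
qed

theorem corollary3:
  fixes \<rho>1 :: "('a::finite) cmat" and \<rho>2 :: "('b::finite) cmat"
  assumes "density \<rho>1" and "density \<rho>2"
  shows "Cmax (tensor \<rho>1 \<rho>2) = Cmax \<rho>1 + Cmax \<rho>2"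
proof -
  have "Cmax (tensor \<rho>1 \<rho>2) = ereal (Inf (Cmax_exponents (tensor \<rho>1 \<rho>2)))"
    by (rule Cmax_eq_Inf_exponents[OF Cmax_exponents_nonempty[OF density_tensor[OF assms]]])
  also have "\<dots> = ereal (Inf (Cmax_exponents \<rho>1) + Inf (Cmax_exponents \<rho>2))"
    using Inf_Cmax_exponents_tensor_le[OF assms] Inf_Cmax_exponents_tensor_ge[OF assms] by simp
  also have "\<dots> = Cmax \<rho>1 + Cmax \<rho>2"
    using Cmax_eq_Inf_exponents[OF Cmax_exponents_nonempty[OF assms(1)]]
      Cmax_eq_Inf_exponents[OF Cmax_exponents_nonempty[OF assms(2)]] by simp
  finally show ?thesis .
qed

end
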